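(* Assume the setting in the context, with a decomposition of $\mathcal X$ over $A$, $g\in\mathcal G_s$ and an integer $T>0$. Let $\mathcal V$ be any subspace of $\mathcal U$ with $\mathcal U=\big(\bigoplus_{i\in\mathcal I}\mathcal E_i\big)\oplus\mathcal V$. If $\{(A,B|_{\mathcal E_i},g,T)\}_{i\in\mathcal I}$ is a decomposition (Definition 1) of $(A,B,g,T)$, then $A(\mathcal X)\cap B(\mathcal V)=\{0\}$.
   Context: Let $\mathcal F$ be a field and $\mathcal X,\mathcal U$ finite-dimensional vector spaces over $\mathcal F$. Let $A:\mathcal X\to\mathcal X$ and $B:\mathcal U\to\mathcal X$ be linear maps with $B$ injective, and consider $x_{t+1}=Ax_t+Bu_t$ and a cost $g:\mathcal X\to\mathbb R_{\ge0}$ with $g(x)=0\iff x=0$. Standing assumption: all minima appearing below are attained. Finite-horizon problem $(A,B,g,T)$: policies $\pi(x_0)=(\pi_t(x_0))_{t=0}^{T-1}\in\mathcal U^T$, cost $J(x_0,\pi)=\sum_{t=0}^Tg(x_t)$ with $x_{t+1}=Ax_t+B\pi_t(x_0)$; $J^*(x_0)=\min_\pi J(x_0,\pi)$; minimizing policies are optimal. A decomposition of $\mathcal X$ over $A$ is a direct sum $\mathcal X=\mathcal X_1\oplus\cdots\oplus\mathcal X_r$ with $r>1$ and $A\mathcal X_i\subseteq\mathcal X_i$, $i\in\mathcal I=\{1,\dots,r\}$; $\rho_i:\mathcal X\to\mathcal X_i$ is the projection along the other summands. $\mathcal G_s$ is the set of $h:\mathcal X\to\mathbb R_{\ge0}$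 with $h(x)=\sum_i h(\rho_i(x))$ for all $x$. $\mathcal E_i=\{u\in\mathcal U:Bu\in\mathcal X_i\}$ (the sum of the $\mathcal E_i$ is direct since $B$ is injective). Subproblem $(A,B|_{\mathcal E_i},g,T)$: same problem for $x_{i,t+1}=Ax_{i,t}+B\bar u_{i,t}$ with states in $\mathcal X_i$ and inputs in $\mathcal E_i$; optimal cost $\bar J_i^*$, optimal policies $\bar\pi_i^*$. Definition 1: the family is a decomposition of $(A,B,g,T)$ if for every $x$: $J^*(x)=\sum_i\bar J_i^*(\rho_i(x))$, and for every choice of optimal policies $\bar\pi_i^*(\rho_i(x))$ there is an optimal policy $\pi^*(x)$ with $\pi^*(x)=\sum_i\bar\pi_i^*(\rho_i(x))$. *)

theory Defs
  imports Complex_Main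
begin

text \<open>The state space X is the whole type 'x, the input space U the whole type 'u,
  both vector spaces over the field 'f with scalar multiplications sX, sU.\<close>

definition direct_sum_decomp :: "('f::field \<Rightarrow> 'x \<Rightarrow> 'x::ab_group_add) \<Rightarrow> 'i set \<Rightarrow> ('i \<Rightarrow> 'x set) \<Rightarrow> bool" where
  "direct_sum_decomp sX I Xs \<longleftrightarrow>
     finite I \<and>
     (\<forall>i\<in>I. module.subspace sX (Xs i)) \<and>
     (\<forall>x. \<exists>f. (\<forall>i\<in>I. f i \<in> Xs i) \<and> x = sum f I) \<and>
     (\<forall>f. (\<forall>i\<in>I. f i \<in> Xs i) \<and> sum f I = 0 \<longrightarrow> (\<forall>i\<in>I. f i = 0))"

definition decomp_over :: "('f::field \<Rightarrow> 'x \<Rightarrow> 'x::ab_group_add) \<Rightarrow> ('x \<Rightarrow> 'x) \<Rightarrow> nat \<Rightarrow> (nat \<Rightarrow> 'x set) \<Rightarrow> bool" where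
  "decomp_over sX A r Xs \<longleftrightarrow> r > 1 \<and> direct_sum_decomp sX {1..r} Xs \<and> (\<forall>i\<in>{1..r}. A ` Xs i \<subseteq> Xs i)"

definition proj :: "'i set \<Rightarrow> ('i \<Rightarrow> 'x::ab_group_add set) \<Rightarrow> 'i \<Rightarrow> 'x \<Rightarrow> 'x" where
  "proj I Xs i x = (THE y. \<exists>f. (\<forall>j\<in>I. f j \<in> Xs j) \<and> sum f I = x \<and> f i = y)"

definition separable_cost :: "'i set \<Rightarrow> ('i \<Rightarrow> 'x::ab_group_add set) \<Rightarrow> ('x \<Rightarrow> real) \<Rightarrow> bool" where
  "separable_cost I Xs h \<longleftrightarrow> (\<forall>x. h x \<ge> 0) \<and> (\<forall>x. h x = (\<Sum>i\<in>I. h (proj I Xs i x)))"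

fun traj :: "('x \<Rightarrow> 'x::plus) \<Rightarrow> ('u \<Rightarrow> 'x) \<Rightarrow> 'x \<Rightarrow> (nat \<Rightarrow> 'u) \<Rightarrow> nat \<Rightarrow> 'x" where
  "traj A B x0 u 0 = x0"
| "traj A B x0 u (Suc t) = A (traj A B x0 u t) + B (u t)"

text \<open>Cost J(x0, pi) = sum_{t=0}^T g(x_t); a policy evaluated at x0 is an input
  sequence (u_0,...,u_{T-1}), represented as a function on nat of which only
  the values at t < T matter.\<close>
definition cost :: "('x \<Rightarrow> 'x::plus) \<Rightarrow> ('u \<Rightarrow> 'x) \<Rightarrow> ('x \<Rightarrow> real) \<Rightarrow> nat \<Rightarrow> 'x \<Rightarrow> (nat \<Rightarrow> 'u) \<Rightarrow> real" where
  "cost A B g T x0 u = (\<Sum>t\<le>T. g (traj A B x0 u t))"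

definition admissible :: "'u set \<Rightarrow> nat \<Rightarrow> (nat \<Rightarrow> 'u) \<Rightarrow> bool" where
  "admissible S T u \<longleftrightarrow> (\<forall>t<T. u t \<in> S)"

definition optimal :: "('x \<Rightarrow> 'x::plus) \<Rightarrow> ('u \<Rightarrow> 'x) \<Rightarrow> 'u set \<Rightarrow> ('x \<Rightarrow> real) \<Rightarrow> nat \<Rightarrow> 'x \<Rightarrow> (nat \<Rightarrow> 'u) \<Rightarrow> bool" where
  "optimal A B S g T x0 u \<longleftrightarrow> admissible S T u \<and>
     (\<forall>v. admissible S T v \<longrightarrow> cost A B g T x0 u \<le> cost A B g T x0 v)"

text \<open>Optimal cost J*(x0) (a minimum, under the standing attainment assumption).\<close>
definition opt_cost :: "('x \<Rightarrow> 'x::plus) \<Rightarrow> ('u \<Rightarrow> 'x) \<Rightarrow> 'u set \<Rightarrow> ('x \<Rightarrow> real) \<Rightarrow> nat \<Rightarrow> 'x \<Rightarrow> real" where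
  "opt_cost A B S g T x0 = (INF u \<in> {u. admissible S T u}. cost A B g T x0 u)"

definition Eset :: "('u \<Rightarrow> 'x) \<Rightarrow> 'x set \<Rightarrow> 'u set" where
  "Eset B Xi = {u. B u \<in> Xi}"

definition is_problem_decomp :: "('x \<Rightarrow> 'x::ab_group_add) \<Rightarrow> ('u::ab_group_add \<Rightarrow> 'x) \<Rightarrow> ('x \<Rightarrow> real) \<Rightarrow> nat \<Rightarrow> 'i set \<Rightarrow> ('i \<Rightarrow> 'x set) \<Rightarrow> bool" where
  "is_problem_decomp A B g T I Xs \<longleftrightarrow>
    (\<forall>x. opt_cost A B UNIV g T x = (\<Sum>i\<in>I. opt_cost A B (Eset B (Xs i)) g T (proj I Xs i x))) \<and>
    (\<forall>x. \<forall>ubar. (\<forall>i\<in>I. optimal A B (Eset B (Xs i)) g T (proj I Xs i x) (ubar i)) \<longrightarrow>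
        (\<exists>u. optimal A B UNIV g T x u \<and> (\<forall>t<T. u t = (\<Sum>i\<in>I. ubar i t))))"

end

theory Submission
  imports Defs
begin

text \<open>Suppose \<open>A x\<^sub>0 = B v\<close> with \<open>v \<in> V\<close>. The input \<open>-v\<close> steers \<open>x\<^sub>0\<close> to \<open>0\<close> in one step, so
  \<open>J*(x\<^sub>0) \<le> g(x\<^sub>0)\<close>. On the other hand each subproblem pays at least
  \<open>g(\<rho>\<^sub>i x\<^sub>0) + g(x\<^sub>i\<^sub>,\<^sub>1)\<close>, and these costs add up to \<open>J*(x\<^sub>0)\<close> while the \<open>g(\<rho>\<^sub>i x\<^sub>0)\<close> add up to
  \<open>g(x\<^sub>0)\<close>. Hence every optimal subpolicy also steers its component to \<open>0\<close> in one step, i.e.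
  \<open>A x\<^sub>0 + B e = 0\<close> for some \<open>e \<in> \<Oplus>\<^sub>i \<E>\<^sub>i\<close>. Then \<open>B (e + v) = 0\<close>, and injectivity of \<open>B\<close>
  together with \<open>(\<Oplus>\<^sub>i \<E>\<^sub>i) \<inter> V = {0}\<close> gives \<open>v = 0\<close>.\<close>

lemma proj_eq:
  assumes "module sX" and d: "direct_sum_decomp sX I Xs"
    and f: "\<forall>j\<in>I. f j \<in> Xs j" "sum f I = x" and i: "i \<in> I"
  shows "proj I Xs i x = f i"
  unfolding proj_def
proof (rule the_equality)
  show "\<exists>h. (\<forall>j\<in>I. h j \<in> Xs j) \<and> sum h I = x \<and> h i = f i" using f by blast
next
  fix y assume "\<exists>h. (\<forall>j\<in>I. h j \<in> Xs j) \<and> sum h I = x \<and> h i = y"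
  then obtain h where h: "\<forall>j\<in>I. h j \<in> Xs j" "sum h I = x" "h i = y" by blast
  have "\<forall>j\<in>I. h j - f j \<in> Xs j"
    using h f d \<open>module sX\<close> unfolding direct_sum_decomp_def by (auto intro: module.subspace_diff)
  moreover have "(\<Sum>j\<in>I. h j - f j) = 0" using h f by (simp add: sum_subtractf)
  ultimately have "h i - f i = 0"
    using d i unfolding direct_sum_decomp_def by (metis (no_types, lifting))
  then show "y = f i" using h by simp
qed

lemma direct_sum_decomp_proj:
  assumes "module sX" and d: "direct_sum_decomp sX I Xs"
  shows proj_in: "i \<in> I \<Longrightarrow> proj I Xs i x \<in> Xs i"
    and sum_proj: "(\<Sum>i\<in>I. proj I Xs i x) = x"
proof -
  from d obtain f where f: "\<forall>i\<in>I. f i \<in> Xs i" "sum f I = x"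
    unfolding direct_sum_decomp_def by metis
  have "proj I Xs i x = f i" if "i \<in> I" for i using proj_eq[OF assms f that] .
  then show "i \<in> I \<Longrightarrow> proj I Xs i x \<in> Xs i" and "(\<Sum>i\<in>I. proj I Xs i x) = x"
    using f by auto
qed

lemma optimal_imp_opt_cost_eq:
  assumes "optimal A B S g T x u"
  shows "opt_cost A B S g T x = cost A B g T x u"
  using assms unfolding opt_cost_def optimal_def by (intro cInf_eq_minimum) auto

lemma cost_ge_first_two_stages:
  assumes "\<And>x. g x \<ge> 0" and "T > 0"
  shows "g x + g (A x + B (u 0)) \<le> cost A B g T x u"
proof -
  have "{0, 1} \<subseteq> {..T}" using \<open>T > 0\<close> by auto
  then have "(\<Sum>t\<in>{0, 1}. g (traj A B x u t)) \<le> cost A B g T x u"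
    unfolding cost_def by (intro sum_mono2) (auto simp: assms(1))
  then show ?thesis by simp
qed

lemma opt_cost_le_if_steerable_to_zero:
  assumes "additive A" "additive B" and "g 0 = 0"
    and "optimal A B UNIV g T x u" and steer: "A x + B w = 0"
  shows "opt_cost A B UNIV g T x \<le> g x"
proof -
  define u\<^sub>0 where "u\<^sub>0 = (\<lambda>t::nat. if t = 0 then w else 0)"
  have "traj A B x u\<^sub>0 (Suc t) = 0" for t
    by (induct t) (simp_all add: u\<^sub>0_def steer additive.zero[OF \<open>additive A\<close>]
        additive.zero[OF \<open>additive B\<close>])
  then have "g (traj A B x u\<^sub>0 t) = (if t = 0 then g x else 0)" for t
    using \<open>g 0 = 0\<close> by (cases t) simp_all
  then have "cost A B g T x u\<^sub>0 = g x"
    unfolding cost_def by simp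
  moreover have "cost A B g T x u \<le> cost A B g T x u\<^sub>0"
    using assms(4) unfolding optimal_def admissible_def by blast
  ultimately show ?thesis using optimal_imp_opt_cost_eq[OF assms(4)] by simp
qed

text \<open>Separability of \<open>g\<close> and additivity of the optimal costs leave no room for any positive
  cost after the first stage of an optimal subpolicy.\<close>

lemma optimal_subpolicy_steers_to_zero:
  assumes "finite I" and g_nonneg: "\<And>x. g x \<ge> 0" and g_zero: "\<And>x. g x = 0 \<longleftrightarrow> x = 0"
    and "T > 0"
    and full: "opt_cost A B UNIV g T x \<le> g x"
    and split_cost: "opt_cost A B UNIV g T x = (\<Sum>i\<in>I. opt_cost A B (S i) g T (p i))"
    and split_g: "g x = (\<Sum>i\<in>I. g (p i))"
    and opt: "\<forall>i\<in>I. optimal A B (S i) g T (p i) (u i)"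
    and "i \<in> I"
  shows "A (p i) + B (u i 0) = 0"
proof -
  have "(\<Sum>i\<in>I. g (p i) + g (A (p i) + B (u i 0))) \<le> (\<Sum>i\<in>I. opt_cost A B (S i) g T (p i))"
  proof (rule sum_mono)
    fix i assume "i \<in> I"
    then have "opt_cost A B (S i) g T (p i) = cost A B g T (p i) (u i)"
      using opt by (simp add: optimal_imp_opt_cost_eq)
    then show "g (p i) + g (A (p i) + B (u i 0)) \<le> opt_cost A B (S i) g T (p i)"
      using cost_ge_first_two_stages[OF g_nonneg \<open>T > 0\<close>, where x = "p i" and u = "u i"] by simp
  qed
  then have "(\<Sum>i\<in>I. g (A (p i) + B (u i 0))) \<le> 0"
    using full split_cost split_g by (simp add: sum.distrib)
  then have "(\<Sum>i\<in>I. g (A (p i) + B (u i 0))) = 0"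
    by (intro order_antisym sum_nonneg g_nonneg)
  then have "\<forall>i\<in>I. g (A (p i) + B (u i 0)) = 0"
    by (simp add: sum_nonneg_eq_0_iff[OF \<open>finite I\<close>] g_nonneg)
  then show ?thesis using \<open>i \<in> I\<close> g_zero by simp
qed

lemma problem_decomp_steers_to_zero:
  assumes "module sX" and d: "direct_sum_decomp sX I Xs"
    and "additive A" "additive B"
    and g_sep: "separable_cost I Xs g" and g_zero: "\<And>x. g x = 0 \<longleftrightarrow> x = 0" and "T > 0"
    and attained_full: "\<exists>u. optimal A B UNIV g T x u"
    and attained_sub: "\<forall>i\<in>I. \<forall>y\<in>Xs i. \<exists>u. optimal A B (Eset B (Xs i)) g T y u"
    and pdec: "is_problem_decomp A B g T I Xs"
    and steer: "A x + B w = 0"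
  obtains e where "\<forall>i\<in>I. e i \<in> Eset B (Xs i)" and "A x + B (\<Sum>i\<in>I. e i) = 0"
proof -
  let ?p = "\<lambda>i. proj I Xs i x"
  have "\<forall>i\<in>I. \<exists>u. optimal A B (Eset B (Xs i)) g T (?p i) u"
    using attained_sub proj_in[OF \<open>module sX\<close> d] by blast
  then obtain u where opt: "\<forall>i\<in>I. optimal A B (Eset B (Xs i)) g T (?p i) (u i)"
    by (metis bchoice)
  have "opt_cost A B UNIV g T x \<le> g x"
    using attained_full opt_cost_le_if_steerable_to_zero[OF \<open>additive A\<close> \<open>additive B\<close> _ _ steer]
      g_zero by blast
  then have steer_i: "\<forall>i\<in>I. A (?p i) + B (u i 0) = 0"
    using optimal_subpolicy_steers_to_zero[OF _ _ g_zero \<open>T > 0\<close> _ _ _ opt] d pdec g_sep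
    unfolding direct_sum_decomp_def is_problem_decomp_def separable_cost_def by blast
  show thesis
  proof
    show "\<forall>i\<in>I. u i 0 \<in> Eset B (Xs i)"
      using opt \<open>T > 0\<close> unfolding optimal_def admissible_def by blast
    have "A x = (\<Sum>i\<in>I. A (?p i))"
      using additive.sum[OF \<open>additive A\<close>, of ?p I] sum_proj[OF \<open>module sX\<close> d, of x] by simp
    then have "A x + B (\<Sum>i\<in>I. u i 0) = (\<Sum>i\<in>I. A (?p i) + B (u i 0))"
      by (simp add: additive.sum[OF \<open>additive B\<close>] sum.distrib)
    also have "\<dots> = 0" using steer_i by (simp add: sum.neutral)
    finally show "A x + B (\<Sum>i\<in>I. u i 0) = 0" .
  qed
qed

theorem proposition5:
  fixes sX :: "'f::field \<Rightarrow> 'x::ab_group_add \<Rightarrow> 'x"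
    and sU :: "'f \<Rightarrow> 'u::ab_group_add \<Rightarrow> 'u"
    and bX :: "'x set" and bU :: "'u set"
    and A :: "'x \<Rightarrow> 'x" and B :: "'u \<Rightarrow> 'x"
    and g :: "'x \<Rightarrow> real"
    and r T :: nat and Xs :: "nat \<Rightarrow> 'x set" and V :: "'u set"
  assumes fdX: "finite_dimensional_vector_space sX bX"
    and fdU: "finite_dimensional_vector_space sU bU"
    and linA: "Vector_Spaces.linear sX sX A"
    and linB: "Vector_Spaces.linear sU sX B"
    and injB: "inj B"
    and g_zero: "\<forall>x. g x = 0 \<longleftrightarrow> x = 0"
    and dec: "decomp_over sX A r Xs"
    and gsep: "separable_cost {1..r} Xs g"
    and Tpos: "T > 0"
    and attained_full: "\<forall>x. \<exists>u. optimal A B UNIV g T x u"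
    and attained_sub: "\<forall>i\<in>{1..r}. \<forall>x\<in>Xs i. \<exists>u. optimal A B (Eset B (Xs i)) g T x u"
    and V_sub: "module.subspace sU V"
    and V_span: "\<forall>u. \<exists>e v. (\<forall>i\<in>{1..r}. e i \<in> Eset B (Xs i)) \<and> v \<in> V \<and> u = (\<Sum>i\<in>{1..r}. e i) + v"
    and V_indep: "\<forall>e v. (\<forall>i\<in>{1..r}. e i \<in> Eset B (Xs i)) \<and> v \<in> V \<and> (\<Sum>i\<in>{1..r}. e i) + v = 0
                    \<longrightarrow> v = 0"
    and pdec: "is_problem_decomp A B g T {1..r} Xs"
  shows "range A \<inter> B ` V = {0}"
proof -
  have "additive A" "additive B"
    using linA linB unfolding Vector_Spaces.linear_iff additive_def by blast+
  note A0 = additive.zero[OF \<open>additive A\<close>] and B0 = additive.zero[OF \<open>additive B\<close>]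
  have "module sX" "module sU"
    using fdX fdU by (simp_all add: finite_dimensional_vector_space_def module_iff_vector_space)
  have ds: "direct_sum_decomp sX {1..r} Xs" using dec unfolding decomp_over_def by blast
  have "y = 0" if y: "y \<in> range A" "y \<in> B ` V" for y
  proof -
    obtain x v where "v \<in> V" "y = A x" "A x = B v" using y by auto
    have "A x + B (- v) = 0" using \<open>A x = B v\<close> additive.minus[OF \<open>additive B\<close>] by simp
    then obtain e where e: "\<forall>i\<in>{1..r}. e i \<in> Eset B (Xs i)" "A x + B (\<Sum>i\<in>{1..r}. e i) = 0"
      by (rule problem_decomp_steers_to_zero[OF \<open>module sX\<close> ds \<open>additive A\<close> \<open>additive B\<close>
            gsep g_zero[rule_format] Tpos attained_full[rule_format] attained_sub pdec])
    have "B ((\<Sum>i\<in>{1..r}. e i) + v) = A x + B (\<Sum>i\<in>{1..r}. e i)"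
      using \<open>A x = B v\<close> additive.add[OF \<open>additive B\<close>] by (simp add: add.commute)
    then have "B ((\<Sum>i\<in>{1..r}. e i) + v) = B 0" using e(2) B0 by simp
    then have "(\<Sum>i\<in>{1..r}. e i) + v = 0" by (rule injD[OF injB])
    then have "v = 0" using V_indep[rule_format, of e v] e(1) \<open>v \<in> V\<close> by blast
    then show "y = 0" using \<open>y = A x\<close> \<open>A x = B v\<close> B0 by simp
  qed
  then have "range A \<inter> B ` V \<subseteq> {0}" by blast
  moreover have "A 0 \<in> range A" "B 0 \<in> B ` V"
    using module.subspace_0[OF \<open>module sU\<close> V_sub] by auto
  ultimately show ?thesis using A0 B0 by auto
qed

end
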